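(* If $\mathcal{R}$ is a finite family of axis-parallel rectangles in general position that is triangle-free and non-crossing, then its intersection graph $G_{\mathcal{R}}$ is planar.
   Context: Rectangles are closed axis-parallel rectangles $X\times Y$; general position means all specifying intervals have pairwise distinct endpoints. Two rectangles intersect if they share a point; $G_{\mathcal{R}}$ has vertex set $\mathcal{R}$ and an edge between any two distinct intersecting rectangles. A family is triangle-free if no three of its rectangles are pairwise intersecting. Two rectangles cross if they intersect but neither contains a corner of the other; a family is non-crossing if no two of its rectangles cross. *)

theory Defs
  imports "HOL-Analysis.Analysis"
begin

text \<open>A rectangle is encoded as ((a,b),(c,d)), standing for the closed
  axis-parallel rectangle [a,b] x [c,d] in the plane.\<close>
type_synonym rect = "(real \<times> real) \<times> (real \<times> real)"

definition rect_set :: "rect \<Rightarrow> (real \<times> real) set" where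
  "rect_set r = (case r of ((a,b),(c,d)) \<Rightarrow> {a..b} \<times> {c..d})"

definition xends :: "rect \<Rightarrow> real set" where
  "xends r = (case r of ((a,b),_) \<Rightarrow> {a,b})"

definition yends :: "rect \<Rightarrow> real set" where
  "yends r = (case r of (_,(c,d)) \<Rightarrow> {c,d})"

definition corners :: "rect \<Rightarrow> (real \<times> real) set" where
  "corners r = (case r of ((a,b),(c,d)) \<Rightarrow> {(a,c),(a,d),(b,c),(b,d)})"

definition general_position :: "rect set \<Rightarrow> bool" where
  "general_position R \<longleftrightarrow>
     (\<forall>r\<in>R. fst (fst r) < snd (fst r) \<and> fst (snd r) < snd (snd r)) \<and>
     (\<forall>r\<in>R. \<forall>s\<in>R. r \<noteq> s \<longrightarrow> xends r \<inter> xends s = {} \<and> yends r \<inter> yends s = {})"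

definition rects_intersect :: "rect \<Rightarrow> rect \<Rightarrow> bool" where
  "rects_intersect r s \<longleftrightarrow> rect_set r \<inter> rect_set s \<noteq> {}"

definition ig_edge :: "rect set \<Rightarrow> rect \<Rightarrow> rect \<Rightarrow> bool" where
  "ig_edge R r s \<longleftrightarrow> r \<in> R \<and> s \<in> R \<and> r \<noteq> s \<and> rects_intersect r s"

definition triangle_free :: "rect set \<Rightarrow> bool" where
  "triangle_free R \<longleftrightarrow>
     \<not> (\<exists>r\<in>R. \<exists>s\<in>R. \<exists>t\<in>R. r \<noteq> s \<and> s \<noteq> t \<and> r \<noteq> t \<and>
          rects_intersect r s \<and> rects_intersect s t \<and> rects_intersect r t)"

definition rects_cross :: "rect \<Rightarrow> rect \<Rightarrow> bool" where
  "rects_cross r s \<longleftrightarrow> rects_intersect r s \<and>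
     corners r \<inter> rect_set s = {} \<and> corners s \<inter> rect_set r = {}"

definition non_crossing :: "rect set \<Rightarrow> bool" where
  "non_crossing R \<longleftrightarrow> (\<forall>r\<in>R. \<forall>s\<in>R. r \<noteq> s \<longrightarrow> \<not> rects_cross r s)"

definition graph_edges :: "'v set \<Rightarrow> ('v \<Rightarrow> 'v \<Rightarrow> bool) \<Rightarrow> 'v set set" where
  "graph_edges V E = {{u,v} | u v. u \<in> V \<and> v \<in> V \<and> u \<noteq> v \<and> E u v}"

definition planar_graph :: "'v set \<Rightarrow> ('v \<Rightarrow> 'v \<Rightarrow> bool) \<Rightarrow> bool" where
  "planar_graph V E \<longleftrightarrow>
    (\<exists>(p :: 'v \<Rightarrow> real \<times> real) (\<gamma> :: 'v set \<Rightarrow> real \<Rightarrow> real \<times> real).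
       inj_on p V \<and>
       (\<forall>u v. {u,v} \<in> graph_edges V E \<longrightarrow>
           arc (\<gamma> {u,v}) \<and> {pathstart (\<gamma> {u,v}), pathfinish (\<gamma> {u,v})} = {p u, p v} \<and>
           path_image (\<gamma> {u,v}) \<inter> p ` V = {p u, p v}) \<and>
       (\<forall>e\<in>graph_edges V E. \<forall>f\<in>graph_edges V E. e \<noteq> f \<longrightarrow>
           path_image (\<gamma> e) \<inter> path_image (\<gamma> f) \<subseteq> p ` (e \<inter> f)))"

end

theory Submission
  imports Defs
begin

text \<open>Call a rectangle of the family maximal if no other rectangle contains it. By
  triangle-freeness a non-maximal rectangle lies in exactly one maximal rectangle, its parent, which
  is also its only neighbour. Two intersecting maximal rectangles are not nested and do not cross, so
  exactly one of them bites the other, i.e. covers a side strip or an upper corner of it. Cutting all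
  biters out of a maximal rectangle \<open>r\<close> leaves an open box, the core of \<open>r\<close>, and cores of
  distinct maximal rectangles are disjoint.

  Each maximal rectangle is drawn at a generic point of its core and each of its pendant rectangles
  at another point of that core; the edge to a pendant rectangle is a straight segment. The edge
  between maximal rectangles \<open>u\<close> and \<open>v\<close>, where \<open>v\<close> bites \<open>u\<close>, bends at a point of
  \<open>u \<inter> v\<close> on the side of \<open>v\<close> facing the core of \<open>u\<close>. Its half at \<open>u\<close> stays in \<open>u\<close> and
  meets \<open>v\<close> only at the bend, and it misses every other biter of \<open>u\<close>, as no biter of \<open>u\<close> other
  than \<open>v\<close> meets \<open>v\<close>. Choosing the point of a maximal rectangle off every line through two
  directions of its edges keeps the edges at a common vertex apart.\<close>

definition bent_path :: "'a::real_normed_vector \<Rightarrow> 'a \<Rightarrow> 'a \<Rightarrow> real \<Rightarrow> 'a" where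
  "bent_path a m b = linepath a m +++ linepath m b"

lemma path_image_bent_path:
  "path_image (bent_path a m b) = closed_segment a m \<union> closed_segment m b"
  by (simp add: bent_path_def path_image_join)

lemma arc_bent_path:
  assumes "a \<noteq> m" "m \<noteq> b" "closed_segment a m \<inter> closed_segment m b = {m}"
  shows "arc (bent_path a m b)"
  unfolding bent_path_def using assms by (intro arc_join arc_linepath) auto

lemma exists_doubleton_orientation:
  obtains orient :: "'a set \<Rightarrow> 'a \<times> 'a" where "\<And>u v. orient {u, v} \<in> {(u, v), (v, u)}"
proof
  fix u v :: 'a
  have "{u, v} = {fst (u, v), snd (u, v)}" by simp
  then have "{u, v} = {fst (SOME ab. {u, v} = {fst ab, snd ab}),
      snd (SOME ab. {u, v} = {fst ab, snd ab})}"
    by (rule someI)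
  then show "(SOME ab. {u, v} = {fst ab, snd ab}) \<in> {(u, v), (v, u)}"
    by (cases "SOME ab. {u, v} = {fst ab, snd ab}") (auto simp: doubleton_eq_iff)
qed

lemma planar_graph_by_oriented_edges:
  fixes V :: "'v set" and E :: "'v \<Rightarrow> 'v \<Rightarrow> bool"
    and p :: "'v \<Rightarrow> real \<times> real" and g :: "'v \<Rightarrow> 'v \<Rightarrow> real \<Rightarrow> real \<times> real"
  assumes E_sym: "\<And>u v. E u v \<Longrightarrow> E v u"
    and E_V: "\<And>u v. E u v \<Longrightarrow> u \<in> V"
    and E_irrefl: "\<And>u. \<not> E u u"
    and inj_p: "inj_on p V"
    and arc: "\<And>u v. E u v \<Longrightarrow> arc (g u v)"
    and ends: "\<And>u v. E u v \<Longrightarrow> pathstart (g u v) = p u \<and> pathfinish (g u v) = p v"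
    and on_vertices: "\<And>u v. E u v \<Longrightarrow> path_image (g u v) \<inter> p ` V = {p u, p v}"
    and reverse: "\<And>u v. E u v \<Longrightarrow> path_image (g v u) = path_image (g u v)"
    and edges_meet: "\<And>u v w x. E u v \<Longrightarrow> E w x \<Longrightarrow> {u, v} \<noteq> {w, x} \<Longrightarrow>
      path_image (g u v) \<inter> path_image (g w x) \<subseteq> p ` ({u, v} \<inter> {w, x})"
  shows "planar_graph V E"
proof -
  obtain orient :: "'v set \<Rightarrow> 'v \<times> 'v" where orient: "\<And>u v. orient {u, v} \<in> {(u, v), (v, u)}"
    using exists_doubleton_orientation by blast
  define \<gamma> where "\<gamma> e = g (fst (orient e)) (snd (orient e))" for e
  have \<gamma>: "\<gamma> {u, v} = g u v \<or> \<gamma> {u, v} = g v u" for u v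
    using orient[of u v] unfolding \<gamma>_def by auto
  have edges: "graph_edges V E = {{u, v} | u v. E u v}"
    unfolding graph_edges_def using E_V E_sym E_irrefl by blast
  show ?thesis
    unfolding planar_graph_def
  proof (intro exI conjI allI impI ballI)
    fix u v assume "{u, v} \<in> graph_edges V E"
    then obtain a b where "{u, v} = {a, b}" "E a b" unfolding edges by blast
    then have "E u v" "E v u" using E_sym by (metis doubleton_eq_iff)+
    then show "arc (\<gamma> {u, v})" "{pathstart (\<gamma> {u, v}), pathfinish (\<gamma> {u, v})} = {p u, p v}"
      using \<gamma>[of u v] arc ends by (auto simp: insert_commute)
    have "path_image (\<gamma> {u, v}) = path_image (g u v)"
      using \<gamma>[of u v] reverse \<open>E u v\<close> by auto
    then show "path_image (\<gamma> {u, v}) \<inter> p ` V = {p u, p v}"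
      using on_vertices[OF \<open>E u v\<close>] by simp
  next
    fix e f assume "e \<in> graph_edges V E" "f \<in> graph_edges V E" "e \<noteq> f"
    then obtain u v w x where uv: "e = {u, v}" "E u v" and wx: "f = {w, x}" "E w x"
      unfolding edges by blast
    have "path_image (\<gamma> e) = path_image (g u v)" "path_image (\<gamma> f) = path_image (g w x)"
      using \<gamma>[of u v] \<gamma>[of w x] reverse uv wx by auto
    then show "path_image (\<gamma> e) \<inter> path_image (\<gamma> f) \<subseteq> p ` (e \<inter> f)"
      using edges_meet[OF uv(2) wx(2)] \<open>e \<noteq> f\<close> uv(1) wx(1) by simp
  qed (fact inj_p)
qed

lemma planar_graph_by_bent_edges:
  fixes V :: "'v set" and E :: "'v \<Rightarrow> 'v \<Rightarrow> bool"
    and p :: "'v \<Rightarrow> real \<times> real" and q :: "'v \<Rightarrow> 'v \<Rightarrow> real \<times> real"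
  defines "arm \<equiv> \<lambda>u v. closed_segment (p u) (q u v)"
  assumes E_sym: "\<And>u v. E u v \<Longrightarrow> E v u"
    and E_V: "\<And>u v. E u v \<Longrightarrow> u \<in> V"
    and E_irrefl: "\<And>u. \<not> E u u"
    and bend_sym: "\<And>u v. E u v \<Longrightarrow> q u v = q v u"
    and inj_p: "inj_on p V"
    and bend_ne: "\<And>u v. E u v \<Longrightarrow> p u \<noteq> q u v"
    and arms_at_vertex: "\<And>u v w. E u v \<Longrightarrow> E u w \<Longrightarrow> v \<noteq> w \<Longrightarrow> arm u v \<inter> arm u w = {p u}"
    and halves_meet: "\<And>u v. E u v \<Longrightarrow> arm u v \<inter> arm v u = {q u v}"
    and arms_disjoint: "\<And>u v w x. E u v \<Longrightarrow> E w x \<Longrightarrow> u \<noteq> w \<Longrightarrow> (w, x) \<noteq> (v, u) \<Longrightarrow>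
      arm u v \<inter> arm w x = {}"
    and vertex_off_arm: "\<And>u v w. E u v \<Longrightarrow> w \<in> V \<Longrightarrow> p w \<in> arm u v \<Longrightarrow> w = u"
  shows "planar_graph V E"
proof (rule planar_graph_by_oriented_edges[where g = "\<lambda>u v. bent_path (p u) (q u v) (p v)"])
  have image: "path_image (bent_path (p u) (q u v) (p v)) = arm u v \<union> arm v u" if "E u v" for u v
    using bend_sym[OF that] by (simp add: arm_def path_image_bent_path closed_segment_commute)
  show "arc (bent_path (p u) (q u v) (p v))" if "E u v" for u v
    using bend_ne[OF that] bend_ne[OF E_sym[OF that]] halves_meet[OF that]
    by (intro arc_bent_path) (auto simp: arm_def bend_sym[OF that] closed_segment_commute)
  show "path_image (bent_path (p u) (q u v) (p v)) \<inter> p ` V = {p u, p v}" if "E u v" for u v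
    unfolding image[OF that] arm_def
    using vertex_off_arm[OF that] vertex_off_arm[OF E_sym[OF that]] E_V[OF that] E_V[OF E_sym[OF that]]
    by (auto simp: arm_def) blast+
  show "path_image (bent_path (p v) (q v u) (p u)) = path_image (bent_path (p u) (q u v) (p v))"
    if "E u v" for u v
    using image that E_sym by blast
  have arms_meet: "arm a b \<inter> arm c d \<subseteq> p ` ({a, b} \<inter> {c, d})"
    if "E a b" "E c d" "{a, b} \<noteq> {c, d}" for a b c d
    using that arms_at_vertex[of a b d] arms_disjoint[of a b c d] by (cases "a = c") auto
  show "path_image (bent_path (p a) (q a b) (p b)) \<inter> path_image (bent_path (p c) (q c d) (p d))
      \<subseteq> p ` ({a, b} \<inter> {c, d})" if "E a b" "E c d" "{a, b} \<noteq> {c, d}" for a b c d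
    using that arms_meet[of a b c d] arms_meet[of b a c d] arms_meet[of a b d c] arms_meet[of b a d c]
      image E_sym by (auto simp: insert_commute)
qed (use assms in \<open>auto simp: bent_path_def\<close>)

lemma linear_closed_segment_strict:
  fixes f :: "'a::real_vector \<Rightarrow> real"
  assumes "linear f" "z \<in> closed_segment a b" "z \<noteq> b"
  shows "f b < f a \<Longrightarrow> f b < f z" and "f a < f b \<Longrightarrow> f z < f b"
proof -
  obtain u where u: "z = (1 - u) *\<^sub>R a + u *\<^sub>R b" "0 \<le> u" "u \<le> 1"
    using assms(2) unfolding closed_segment_def by blast
  have "u \<noteq> 1" using u(1) assms(3) by auto
  with u(3) have "u < 1" by simp
  have "f z = (1 - u) * f a + u * f b"
    unfolding u(1) using assms(1) by (simp add: linear_add linear_scale)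
  then have "f z - f b = (1 - u) * (f a - f b)" by (simp add: algebra_simps)
  with \<open>u < 1\<close> show "f b < f a \<Longrightarrow> f b < f z" and "f a < f b \<Longrightarrow> f z < f b"
    by (smt (verit) mult_pos_pos mult_pos_neg)+
qed

lemma exists_point_off_lines:
  fixes S T :: "'a::euclidean_space set"
  assumes "2 \<le> DIM('a)" "open S" "S \<noteq> {}" "finite T"
  obtains p where "p \<in> S" "p \<notin> T" "\<And>a b. a \<in> T \<Longrightarrow> b \<in> T \<Longrightarrow> a \<noteq> b \<Longrightarrow> \<not> collinear {a, p, b}"
proof -
  define lines where "lines = (\<lambda>(a, b). affine hull {a, b}) ` (T \<times> T)"
  have "negligible L" if "L \<in> lines" for L
  proof -
    obtain a b where "L = affine hull {a, b}" using \<open>L \<in> lines\<close> unfolding lines_def by auto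
    moreover have "card {a, b} \<le> DIM('a)" using assms(1) by (cases "a = b") auto
    ultimately show ?thesis
      by (simp add: negligible_convex_interior affine_imp_convex empty_interior_affine_hull)
  qed
  moreover have "finite lines" using assms(4) by (simp add: lines_def)
  ultimately have "negligible (T \<union> \<Union> lines)"
    using assms(4) by (simp add: negligible_Un negligible_finite negligible_Union)
  then have "\<not> S \<subseteq> T \<union> \<Union> lines"
    using open_not_negligible[OF assms(2,3)] negligible_subset by blast
  then obtain p where p: "p \<in> S" "p \<notin> T" "p \<notin> \<Union> lines" by blast
  have "\<not> collinear {a, p, b}" if "a \<in> T" "b \<in> T" "a \<noteq> b" for a b
  proof
    assume "collinear {a, p, b}"
    then have "p \<in> affine hull {a, b}"
      using collinear_3_affine_hull[OF \<open>a \<noteq> b\<close>] by (simp add: insert_commute)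
    then show False using p(3) that unfolding lines_def by blast
  qed
  with p show thesis using that by blast
qed

lemma inj_into_infinite:
  assumes "finite A" "infinite B"
  obtains f where "inj_on f A" "f ` A \<subseteq> B"
proof -
  obtain C where "C \<subseteq> B" "finite C" "card C = card A"
    using infinite_arbitrarily_large[OF assms(2)] by blast
  then show thesis using card_le_inj[OF assms(1), of C] that by auto
qed

abbreviation xl :: "rect \<Rightarrow> real" where "xl r \<equiv> fst (fst r)"
abbreviation xr :: "rect \<Rightarrow> real" where "xr r \<equiv> snd (fst r)"
abbreviation yl :: "rect \<Rightarrow> real" where "yl r \<equiv> fst (snd r)"
abbreviation yh :: "rect \<Rightarrow> real" where "yh r \<equiv> snd (snd r)"

lemma rect_set_eq: "rect_set r = {xl r..xr r} \<times> {yl r..yh r}"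
  by (cases r) (auto simp: rect_set_def split: prod.splits)

lemma mem_rect_set:
  "z \<in> rect_set r \<longleftrightarrow> xl r \<le> fst z \<and> fst z \<le> xr r \<and> yl r \<le> snd z \<and> snd z \<le> yh r"
  by (cases z) (auto simp: rect_set_eq)

lemma convex_rect_set: "convex (rect_set r)"
  unfolding rect_set_eq by (intro convex_Times) auto

lemma corners_eq: "corners r = {(xl r, yl r), (xl r, yh r), (xr r, yl r), (xr r, yh r)}"
  by (cases r) (auto simp: corners_def split: prod.splits)

lemma xends_eq: "xends r = {xl r, xr r}"
  by (cases r) (auto simp: xends_def split: prod.splits)

lemma yends_eq: "yends r = {yl r, yh r}"
  by (cases r) (auto simp: yends_def split: prod.splits)

lemma rects_intersect_commute: "rects_intersect r s \<longleftrightarrow> rects_intersect s r"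
  unfolding rects_intersect_def by auto

text \<open>An interval \<open>[a, b]\<close> is the pair \<open>(a, b)\<close>, so \<open>fst r\<close> and \<open>snd r\<close> are the
  x- and y-interval of a rectangle \<open>r\<close>.\<close>

definition overlaps_below :: "real \<times> real \<Rightarrow> real \<times> real \<Rightarrow> bool" where
  "overlaps_below I J \<longleftrightarrow> fst I < fst J \<and> fst J < snd I \<and> snd I < snd J"

definition strictly_inside :: "real \<times> real \<Rightarrow> real \<times> real \<Rightarrow> bool" where
  "strictly_inside I J \<longleftrightarrow> fst J < fst I \<and> snd I < snd J"

lemmas interval_rel_defs = overlaps_below_def strictly_inside_def

lemma interval_relation_cases:
  assumes "fst I \<le> snd J" "fst J \<le> snd I"
    and "{fst I, snd I} \<inter> {fst J, snd J} = {}"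
  shows "overlaps_below I J \<or> overlaps_below J I \<or> strictly_inside I J \<or> strictly_inside J I"
proof -
  have "fst I \<noteq> fst J" "snd I \<noteq> snd J" "fst I \<noteq> snd J" "fst J \<noteq> snd I"
    using assms(3) by auto
  then show ?thesis using assms(1,2) unfolding interval_rel_defs by argo
qed

lemma interval_relations_exclusive:
  "\<not> (overlaps_below I J \<and> overlaps_below J I)" "\<not> (overlaps_below I J \<and> strictly_inside I J)"
  "\<not> (overlaps_below I J \<and> strictly_inside J I)" "\<not> (overlaps_below J I \<and> strictly_inside I J)"
  "\<not> (overlaps_below J I \<and> strictly_inside J I)" "\<not> (strictly_inside I J \<and> strictly_inside J I)"
  unfolding interval_rel_defs by auto

text \<open>\<open>bites t r\<close>: \<open>t\<close> covers a side strip or an upper corner of \<open>r\<close>. Counting only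
  upper corners breaks the symmetry of corner overlaps, so that of two intersecting rectangles
  neither of which contains the other, exactly one bites the other.\<close>
definition bites :: "rect \<Rightarrow> rect \<Rightarrow> bool" where
  "bites t r \<longleftrightarrow>
     strictly_inside (fst r) (fst t) \<and> (overlaps_below (snd t) (snd r) \<or> overlaps_below (snd r) (snd t)) \<or>
     strictly_inside (snd r) (snd t) \<and> (overlaps_below (fst t) (fst r) \<or> overlaps_below (fst r) (fst t)) \<or>
     overlaps_below (snd r) (snd t) \<and> (overlaps_below (fst t) (fst r) \<or> overlaps_below (fst r) (fst t))"

lemma bites_iff_not_bitten:
  assumes "overlaps_below (fst r) (fst t) \<or> overlaps_below (fst t) (fst r) \<or>
           strictly_inside (fst r) (fst t) \<or> strictly_inside (fst t) (fst r)"
    and "overlaps_below (snd r) (snd t) \<or> overlaps_below (snd t) (snd r) \<or>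
           strictly_inside (snd r) (snd t) \<or> strictly_inside (snd t) (snd r)"
    and "\<not> (strictly_inside (fst r) (fst t) \<and> strictly_inside (snd t) (snd r))"
    and "\<not> (strictly_inside (fst t) (fst r) \<and> strictly_inside (snd r) (snd t))"
    and "\<not> (strictly_inside (fst r) (fst t) \<and> strictly_inside (snd r) (snd t))"
    and "\<not> (strictly_inside (fst t) (fst r) \<and> strictly_inside (snd t) (snd r))"
  shows "bites t r \<longleftrightarrow> \<not> bites r t"
  using assms interval_relations_exclusive[where I = "fst r" and J = "fst t"]
    interval_relations_exclusive[where I = "snd r" and J = "snd t"]
  unfolding bites_def by blast

locale rect_family =
  fixes R :: "rect set"
  assumes finite_R: "finite R" and general_position: "general_position R"
    and triangle_free: "triangle_free R" and non_crossing: "non_crossing R"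
begin

lemma rect_nondegenerate: "r \<in> R \<Longrightarrow> xl r < xr r \<and> yl r < yh r"
  using general_position unfolding general_position_def by auto

lemma endpoints_distinct:
  assumes "r \<in> R" "s \<in> R" "r \<noteq> s"
  shows "{xl r, xr r} \<inter> {xl s, xr s} = {}" "{yl r, yh r} \<inter> {yl s, yh s} = {}"
  using general_position assms unfolding general_position_def xends_eq yends_eq by blast+

lemma rects_intersect_iff:
  assumes "r \<in> R" "s \<in> R"
  shows "rects_intersect r s \<longleftrightarrow> xl r \<le> xr s \<and> xl s \<le> xr r \<and> yl r \<le> yh s \<and> yl s \<le> yh r"
proof
  assume "rects_intersect r s"
  then obtain z where "z \<in> rect_set r" "z \<in> rect_set s" unfolding rects_intersect_def by auto
  then show "xl r \<le> xr s \<and> xl s \<le> xr r \<and> yl r \<le> yh s \<and> yl s \<le> yh r"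
    unfolding mem_rect_set by linarith
next
  assume "xl r \<le> xr s \<and> xl s \<le> xr r \<and> yl r \<le> yh s \<and> yl s \<le> yh r"
  then have "(max (xl r) (xl s), max (yl r) (yl s)) \<in> rect_set r \<inter> rect_set s"
    using rect_nondegenerate[OF assms(1)] rect_nondegenerate[OF assms(2)] by (auto simp: mem_rect_set)
  then show "rects_intersect r s" unfolding rects_intersect_def by blast
qed

lemma rects_intersect_strict:
  assumes "r \<in> R" "s \<in> R" "r \<noteq> s" "rects_intersect r s"
  shows "xl r < xr s \<and> xl s < xr r \<and> yl r < yh s \<and> yl s < yh r"
  using assms(4) endpoints_distinct[OF assms(1-3)] unfolding rects_intersect_iff[OF assms(1,2)]
  by (metis disjoint_iff insertCI order_le_less)

lemma intersecting_relation_cases: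
  assumes "r \<in> R" "s \<in> R" "r \<noteq> s" "rects_intersect r s"
  shows "overlaps_below (fst r) (fst s) \<or> overlaps_below (fst s) (fst r) \<or>
           strictly_inside (fst r) (fst s) \<or> strictly_inside (fst s) (fst r)"
    and "overlaps_below (snd r) (snd s) \<or> overlaps_below (snd s) (snd r) \<or>
           strictly_inside (snd r) (snd s) \<or> strictly_inside (snd s) (snd r)"
  using rects_intersect_strict[OF assms] endpoints_distinct[OF assms(1-3)]
  by (intro interval_relation_cases; simp)+

lemma not_crossing:
  assumes "r \<in> R" "s \<in> R" "r \<noteq> s" "rects_intersect r s"
  shows "\<not> (strictly_inside (fst r) (fst s) \<and> strictly_inside (snd s) (snd r))"
proof
  assume "strictly_inside (fst r) (fst s) \<and> strictly_inside (snd s) (snd r)"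
  then have "corners r \<inter> rect_set s = {}" "corners s \<inter> rect_set r = {}"
    unfolding corners_eq interval_rel_defs by (auto simp: mem_rect_set)
  then have "rects_cross r s" using assms(4) unfolding rects_cross_def by blast
  then show False using non_crossing assms unfolding non_crossing_def by blast
qed

lemma no_common_neighbour:
  assumes "r \<in> R" "s \<in> R" "t \<in> R" "s \<noteq> r" "t \<noteq> r" "s \<noteq> t"
    and "rects_intersect r s" "rects_intersect r t"
  shows "\<not> rects_intersect s t"
  using triangle_free assms unfolding triangle_free_def by metis

lemma ig_edge_sym: "ig_edge R u v \<Longrightarrow> ig_edge R v u"
  unfolding ig_edge_def by (auto simp: rects_intersect_commute)

definition maximal_rects :: "rect set" where
  "maximal_rects = {r \<in> R. \<forall>s\<in>R. s \<noteq> r \<longrightarrow> \<not> rect_set r \<subseteq> rect_set s}"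

definition pendant :: "rect \<Rightarrow> rect \<Rightarrow> bool" where
  "pendant t r \<longleftrightarrow> r \<in> R \<and> t \<in> R \<and> t \<noteq> r \<and> rect_set t \<subseteq> rect_set r"

lemma maximal_rects_subset: "maximal_rects \<subseteq> R"
  unfolding maximal_rects_def by auto

lemma rect_set_subset_iff:
  assumes "r \<in> R"
  shows "rect_set r \<subseteq> rect_set s \<longleftrightarrow> xl s \<le> xl r \<and> xr r \<le> xr s \<and> yl s \<le> yl r \<and> yh r \<le> yh s"
proof
  assume "rect_set r \<subseteq> rect_set s"
  moreover have "(xl r, yl r) \<in> rect_set r" "(xr r, yh r) \<in> rect_set r"
    using rect_nondegenerate[OF assms] by (auto simp: mem_rect_set)
  ultimately have "(xl r, yl r) \<in> rect_set s" "(xr r, yh r) \<in> rect_set s" by auto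
  then show "xl s \<le> xl r \<and> xr r \<le> xr s \<and> yl s \<le> yl r \<and> yh r \<le> yh s"
    by (simp add: mem_rect_set)
next
  assume "xl s \<le> xl r \<and> xr r \<le> xr s \<and> yl s \<le> yl r \<and> yh r \<le> yh s"
  then show "rect_set r \<subseteq> rect_set s" by (auto simp: rect_set_eq)
qed

lemma pendant_edge:
  assumes "pendant t r"
  shows "ig_edge R r t"
proof -
  have "(xl t, yl t) \<in> rect_set t"
    using assms rect_nondegenerate[of t] unfolding pendant_def by (simp add: mem_rect_set)
  then show ?thesis using assms unfolding pendant_def ig_edge_def rects_intersect_def by blast
qed

lemma pendant_only_neighbour:
  assumes "pendant t r" "ig_edge R t u"
  shows "u = r"
proof (rule ccontr)
  assume "u \<noteq> r"
  have "rects_intersect r u"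
    using assms unfolding pendant_def ig_edge_def rects_intersect_def by blast
  then show False
    using no_common_neighbour[of r t u] pendant_edge[OF assms(1)] assms \<open>u \<noteq> r\<close>
    unfolding ig_edge_def by blast
qed

lemma pendant_unique: "pendant t r \<Longrightarrow> pendant t r' \<Longrightarrow> r' = r"
  using pendant_only_neighbour ig_edge_sym[OF pendant_edge] by blast

lemma pendant_maximal:
  assumes "pendant t r"
  shows "r \<in> maximal_rects"
proof -
  have "\<not> rect_set r \<subseteq> rect_set s" if "s \<in> R" "s \<noteq> r" for s
  proof
    assume "rect_set r \<subseteq> rect_set s"
    show False
    proof (cases "s = t")
      case True
      then have "xl t \<le> xl r" "xl r \<le> xl t"
        using \<open>rect_set r \<subseteq> rect_set s\<close> assms rect_set_subset_iff unfolding pendant_def by blast+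
      then show False using endpoints_distinct[of r t] assms unfolding pendant_def by auto
    next
      case False
      then have "pendant t s" using assms that \<open>rect_set r \<subseteq> rect_set s\<close> unfolding pendant_def by auto
      then show False using pendant_unique[OF assms] that by blast
    qed
  qed
  then show ?thesis using assms unfolding pendant_def maximal_rects_def by auto
qed

lemma pendant_not_maximal: "pendant t r \<Longrightarrow> t \<notin> maximal_rects"
  unfolding maximal_rects_def pendant_def by auto

lemma neighbour_of_maximal:
  assumes "r \<in> maximal_rects" "ig_edge R r t"
  shows "t \<in> maximal_rects \<or> pendant t r"
proof (cases "t \<in> maximal_rects")
  case False
  then obtain s where s: "pendant t s"
    using assms(2) unfolding maximal_rects_def pendant_def ig_edge_def by auto
  then show ?thesis using pendant_only_neighbour[OF s ig_edge_sym[OF assms(2)]] by simp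
qed simp

definition parent :: "rect \<Rightarrow> rect" where
  "parent t = (THE r. pendant t r)"

lemma parent_eq: "pendant t r \<Longrightarrow> parent t = r"
  unfolding parent_def using pendant_unique by (intro the_equality) auto

lemma pendant_parent:
  assumes "t \<in> R" "t \<notin> maximal_rects"
  shows "pendant t (parent t)"
proof -
  obtain r where "pendant t r"
    using assms unfolding maximal_rects_def pendant_def by auto
  then show ?thesis using parent_eq by simp
qed

lemma edge_cases:
  assumes "ig_edge R u v"
  obtains "u \<in> maximal_rects" "v \<in> maximal_rects"
  | "pendant v u"
  | "pendant u v"
proof (cases "u \<in> maximal_rects")
  case True
  then show thesis using neighbour_of_maximal[OF True assms] that by blast
next
  case False
  then have "pendant u (parent u)" using assms pendant_parent unfolding ig_edge_def by blast
  then show thesis using pendant_only_neighbour[OF _ assms] that by blast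
qed

lemma maximal_not_nested:
  assumes "r \<in> maximal_rects" "t \<in> maximal_rects" "r \<noteq> t"
  shows "\<not> (strictly_inside (fst r) (fst t) \<and> strictly_inside (snd r) (snd t))"
proof
  assume "strictly_inside (fst r) (fst t) \<and> strictly_inside (snd r) (snd t)"
  then have "xl t \<le> xl r \<and> xr r \<le> xr t \<and> yl t \<le> yl r \<and> yh r \<le> yh t"
    unfolding interval_rel_defs by auto
  then have "rect_set r \<subseteq> rect_set t"
    using rect_set_subset_iff[of r t] assms(1) maximal_rects_subset by blast
  then show False using assms unfolding maximal_rects_def by auto
qed

lemma bites_exclusive:
  assumes "r \<in> maximal_rects" "t \<in> maximal_rects" "ig_edge R r t"
  shows "bites t r \<longleftrightarrow> \<not> bites r t"
proof -
  have "r \<in> R" "t \<in> R" "r \<noteq> t" "rects_intersect r t" "rects_intersect t r"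
    using assms(3) unfolding ig_edge_def by (auto simp: rects_intersect_commute)
  then show ?thesis
    using intersecting_relation_cases[of r t] not_crossing[of r t] not_crossing[of t r]
      maximal_not_nested[OF assms(1,2)] maximal_not_nested[OF assms(2,1)]
    by (intro bites_iff_not_bitten) auto
qed


definition biters :: "rect \<Rightarrow> rect set" where
  "biters r = {t. ig_edge R r t \<and> bites t r}"

lemma finite_biters: "finite {t \<in> biters r. P t}"
  by (rule finite_subset[OF _ finite_R]) (auto simp: biters_def ig_edge_def)

definition core_left :: "rect \<Rightarrow> real" where
  "core_left r = Max (insert (xl r) (xr ` {t \<in> biters r. overlaps_below (fst t) (fst r)}))"

definition core_right :: "rect \<Rightarrow> real" where
  "core_right r = Min (insert (xr r) (xl ` {t \<in> biters r. overlaps_below (fst r) (fst t)}))"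

definition core_bottom :: "rect \<Rightarrow> real" where
  "core_bottom r = Max (insert (yl r) (yh ` {t \<in> biters r. overlaps_below (snd t) (snd r)}))"

definition core_top :: "rect \<Rightarrow> real" where
  "core_top r = Min (insert (yh r) (yl ` {t \<in> biters r. overlaps_below (snd r) (snd t)}))"

definition core :: "rect \<Rightarrow> (real \<times> real) set" where
  "core r = {core_left r<..<core_right r} \<times> {core_bottom r<..<core_top r}"

lemma core_bounds:
  "xl r \<le> core_left r" "core_right r \<le> xr r" "yl r \<le> core_bottom r" "core_top r \<le> yh r"
  "t \<in> biters r \<Longrightarrow> overlaps_below (fst t) (fst r) \<Longrightarrow> xr t \<le> core_left r"
  "t \<in> biters r \<Longrightarrow> overlaps_below (fst r) (fst t) \<Longrightarrow> core_right r \<le> xl t"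
  "t \<in> biters r \<Longrightarrow> overlaps_below (snd t) (snd r) \<Longrightarrow> yh t \<le> core_bottom r"
  "t \<in> biters r \<Longrightarrow> overlaps_below (snd r) (snd t) \<Longrightarrow> core_top r \<le> yl t"
  unfolding core_left_def core_right_def core_bottom_def core_top_def
  using finite_biters by auto

lemma biterD:
  assumes "t \<in> biters r"
  shows "t \<in> R" "t \<noteq> r" "rects_intersect r t" "bites t r" "r \<in> R"
  using assms unfolding biters_def ig_edge_def by auto

lemma biters_separated:
  assumes "r \<in> R" "t \<in> biters r" "u \<in> biters r" "t \<noteq> u"
  shows "overlaps_below (fst t) (fst r) \<Longrightarrow> overlaps_below (fst r) (fst u) \<Longrightarrow> xr t < xl u"
    and "overlaps_below (snd t) (snd r) \<Longrightarrow> overlaps_below (snd r) (snd u) \<Longrightarrow> yh t < yl u"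
proof -
  note t = biterD[OF assms(2)] and u = biterD[OF assms(3)]
  have disjoint: "\<not> rects_intersect t u"
    using no_common_neighbour[OF assms(1) t(1) u(1) t(2) u(2) assms(4) t(3) u(3)] .
  show "xr t < xl u" if "overlaps_below (fst t) (fst r)" "overlaps_below (fst r) (fst u)"
  proof -
    have "yl t < yh r \<and> yh r < yh t" "yl u < yh r \<and> yh r < yh u"
      using t(4) u(4) that rect_nondegenerate[OF assms(1)]
      unfolding bites_def interval_rel_defs by auto
    then show ?thesis
      using disjoint that rects_intersect_iff[OF t(1) u(1)] unfolding interval_rel_defs by auto
  qed
  show "yh t < yl u" if "overlaps_below (snd t) (snd r)" "overlaps_below (snd r) (snd u)"
  proof -
    have "xl t < xl r \<and> xr r < xr t"
      using t(4) that interval_relations_exclusive[where I = "snd t" and J = "snd r"]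
      unfolding bites_def interval_rel_defs by auto
    moreover have "xl u < xr r \<and> xl r < xr u"
      using rects_intersect_strict[OF assms(1) u(1) u(2)[symmetric] u(3)] by auto
    ultimately show ?thesis
      using disjoint that rects_intersect_iff[OF t(1) u(1)] unfolding interval_rel_defs by auto
  qed
qed

lemma core_bounds_less:
  assumes "r \<in> R"
  shows "core_left r < core_right r" "core_bottom r < core_top r"
proof -
  have "t \<noteq> u" if "overlaps_below (fst t) (fst r)" "overlaps_below (fst r) (fst u)" for t u
    using that interval_relations_exclusive by blast
  then show "core_left r < core_right r"
    unfolding core_left_def core_right_def using finite_biters rect_nondegenerate[OF assms]
      biters_separated(1)[OF assms] by (auto simp: Max_less_iff Min_gr_iff interval_rel_defs)
  have "t \<noteq> u" if "overlaps_below (snd t) (snd r)" "overlaps_below (snd r) (snd u)" for t u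
    using that interval_relations_exclusive by blast
  then show "core_bottom r < core_top r"
    unfolding core_bottom_def core_top_def using finite_biters rect_nondegenerate[OF assms]
      biters_separated(2)[OF assms] by (auto simp: Max_less_iff Min_gr_iff interval_rel_defs)
qed

lemma open_core: "open (core r)"
  unfolding core_def by (intro open_Times) auto

lemma convex_core: "convex (core r)"
  unfolding core_def by (intro convex_Times) auto

lemma core_nonempty: "r \<in> R \<Longrightarrow> core r \<noteq> {}"
  unfolding core_def using core_bounds_less[of r] by simp

lemma core_strictly_inside:
  "z \<in> core r \<Longrightarrow> xl r < fst z \<and> fst z < xr r \<and> yl r < snd z \<and> snd z < yh r"
  unfolding core_def using core_bounds(1-4)[of r] by auto

lemma core_subset_rect: "core r \<subseteq> rect_set r"
  using core_strictly_inside by (fastforce simp: mem_rect_set)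

lemma core_disjoint_biter:
  assumes "t \<in> biters r"
  shows "core r \<inter> rect_set t = {}"
  using biterD(4)[OF assms] core_bounds(5-8)[OF assms]
  unfolding core_def bites_def by (auto simp: mem_rect_set)

text \<open>For a biter \<open>t\<close> of \<open>r\<close>: a point of \<open>r \<inter> t\<close> on the side of \<open>t\<close> that faces the core
  of \<open>r\<close>.\<close>
definition contact :: "rect \<Rightarrow> rect \<Rightarrow> real \<times> real" where
  "contact r t =
    ((if overlaps_below (fst t) (fst r) then xr t else if overlaps_below (fst r) (fst t) then xl t else xl r),
     (if overlaps_below (snd r) (snd t) then yl t else if overlaps_below (snd t) (snd r) then yh t else yl r))"

lemma contact_in_rects:
  assumes "t \<in> biters r"
  shows "contact r t \<in> rect_set r" "contact r t \<in> rect_set t"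
  using biterD(4)[OF assms] rect_nondegenerate[OF biterD(1)[OF assms]]
    rect_nondegenerate[OF biterD(5)[OF assms]]
  unfolding contact_def bites_def interval_rel_defs by (auto simp: mem_rect_set)

lemma contact_notin_core_of_biter:
  assumes "t \<in> biters r"
  shows "contact r t \<notin> core t"
  using biterD(4)[OF assms] core_strictly_inside[of "contact r t" t]
  unfolding contact_def bites_def interval_rel_defs by auto

lemma segment_to_contact:
  assumes "p \<in> core r" "t \<in> biters r"
  shows "closed_segment p (contact r t) \<inter> rect_set t \<subseteq> {contact r t}"
proof
  fix z assume z: "z \<in> closed_segment p (contact r t) \<inter> rect_set t"
  show "z \<in> {contact r t}"
  proof (rule ccontr)
    assume "z \<notin> {contact r t}"
    then have "z \<in> closed_segment p (contact r t)" "z \<noteq> contact r t" using z by auto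
    note strict = linear_closed_segment_strict[OF bounded_linear.linear[OF bounded_linear_fst] this]
      linear_closed_segment_strict[OF bounded_linear.linear[OF bounded_linear_snd] this]
    have "p \<in> core r" by (fact assms(1))
    then show False
      using z biterD(4)[OF assms(2)] core_bounds(5-8)[OF assms(2)] strict
      unfolding core_def contact_def bites_def interval_rel_defs by (auto simp: mem_rect_set)
  qed
qed

lemma biter_beyond_neighbour:
  assumes "ig_edge R r s" "t \<in> biters r" "\<not> rects_intersect s t"
  obtains "overlaps_below (fst r) (fst t)" "xr s < xl t"
    | "overlaps_below (fst t) (fst r)" "xr t < xl s"
    | "overlaps_below (snd r) (snd t)" "yh s < yl t"
    | "overlaps_below (snd t) (snd r)" "yh t < yl s"
proof -
  note t = biterD[OF assms(2)]
  have s: "s \<in> R" "r \<in> R" "rects_intersect r s" using assms(1) unfolding ig_edge_def by auto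
  have "xr s < xl t \<or> xr t < xl s \<or> yh s < yl t \<or> yh t < yl s"
    using assms(3) rects_intersect_iff[OF s(1) t(1)] by auto
  moreover have "xl r \<le> xr s \<and> xl s \<le> xr r \<and> yl r \<le> yh s \<and> yl s \<le> yh r"
    using rects_intersect_iff[OF s(2,1)] s(3) by auto
  ultimately show thesis
    using that t(4) unfolding bites_def interval_rel_defs by fastforce
qed

lemma segment_avoids_biter:
  assumes "p \<in> core r" "ig_edge R r s" "q \<in> rect_set s" "t \<in> biters r" "\<not> rects_intersect s t"
  shows "closed_segment p q \<inter> rect_set t = {}"
proof -
  obtain H where "convex H" "p \<in> H" "q \<in> H" "H \<inter> rect_set t = {}"
    using assms(2,4,5)
  proof (cases rule: biter_beyond_neighbour)
    case 1
    then have "p \<in> {..<xl t} \<times> UNIV" "q \<in> {..<xl t} \<times> UNIV"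
      using assms(1,3) core_bounds(6)[OF assms(4)] by (auto simp: core_def mem_rect_set mem_Times_iff)
    then show thesis by (intro that[of "{..<xl t} \<times> UNIV"] convex_Times) (auto simp: mem_rect_set)
  next
    case 2
    then have "p \<in> {xr t<..} \<times> UNIV" "q \<in> {xr t<..} \<times> UNIV"
      using assms(1,3) core_bounds(5)[OF assms(4)] by (auto simp: core_def mem_rect_set mem_Times_iff)
    then show thesis by (intro that[of "{xr t<..} \<times> UNIV"] convex_Times) (auto simp: mem_rect_set)
  next
    case 3
    then have "p \<in> UNIV \<times> {..<yl t}" "q \<in> UNIV \<times> {..<yl t}"
      using assms(1,3) core_bounds(8)[OF assms(4)] by (auto simp: core_def mem_rect_set mem_Times_iff)
    then show thesis by (intro that[of "UNIV \<times> {..<yl t}"] convex_Times) (auto simp: mem_rect_set)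
  next
    case 4
    then have "p \<in> UNIV \<times> {yh t<..}" "q \<in> UNIV \<times> {yh t<..}"
      using assms(1,3) core_bounds(7)[OF assms(4)] by (auto simp: core_def mem_rect_set mem_Times_iff)
    then show thesis by (intro that[of "UNIV \<times> {yh t<..}"] convex_Times) (auto simp: mem_rect_set)
  qed
  then show ?thesis using closed_segment_subset by blast
qed

lemma maximal_edge_biters:
  assumes "u \<in> maximal_rects" "v \<in> maximal_rects" "ig_edge R u v"
  shows "v \<in> biters u \<longleftrightarrow> u \<notin> biters v"
  using bites_exclusive[OF assms] ig_edge_sym[OF assms(3)] assms(3) unfolding biters_def by auto

definition meet :: "rect \<Rightarrow> rect \<Rightarrow> real \<times> real" where
  "meet u v = (if bites v u then contact u v else contact v u)"

lemma meet_contact: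
  assumes "u \<in> maximal_rects" "v \<in> maximal_rects" "ig_edge R u v"
  obtains a b where "(a, b) \<in> {(u, v), (v, u)}" "b \<in> biters a"
    "meet u v = contact a b" "meet v u = contact a b"
proof (cases "v \<in> biters u")
  case True
  then have "\<not> bites u v" using maximal_edge_biters[OF assms] ig_edge_sym[OF assms(3)]
    unfolding biters_def by blast
  then have "meet u v = contact u v" "meet v u = contact u v"
    using biterD(4)[OF True] unfolding meet_def by simp_all
  then show thesis using True by (intro that[of u v]) simp_all
next
  case False
  then have "u \<in> biters v" using maximal_edge_biters[OF assms] by blast
  moreover have "\<not> bites v u" using False assms(3) unfolding biters_def by blast
  ultimately have "meet u v = contact v u" "meet v u = contact v u"
    using biterD(4) unfolding meet_def by simp_all
  then show thesis using \<open>u \<in> biters v\<close> by (intro that[of v u]) simp_all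
qed

lemma meet_sym:
  assumes "u \<in> maximal_rects" "v \<in> maximal_rects" "ig_edge R u v"
  shows "meet u v = meet v u"
proof -
  obtain a b where "meet u v = contact a b" "meet v u = contact a b"
    using meet_contact[OF assms] .
  then show ?thesis by simp
qed

lemma meet_in_rects:
  assumes "u \<in> maximal_rects" "v \<in> maximal_rects" "ig_edge R u v"
  shows "meet u v \<in> rect_set u" "meet u v \<in> rect_set v"
proof -
  obtain a b where "(a, b) \<in> {(u, v), (v, u)}" "b \<in> biters a" "meet u v = contact a b"
    using meet_contact[OF assms] .
  then show "meet u v \<in> rect_set u" "meet u v \<in> rect_set v"
    using contact_in_rects[of b a] by auto
qed

lemma meet_notin_cores:
  assumes "u \<in> maximal_rects" "v \<in> maximal_rects" "ig_edge R u v"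
  shows "meet u v \<notin> core u" "meet u v \<notin> core v"
proof -
  obtain a b where ab: "(a, b) \<in> {(u, v), (v, u)}" "b \<in> biters a" "meet u v = contact a b"
    using meet_contact[OF assms] .
  have "contact a b \<notin> core a"
    using contact_in_rects(2)[OF ab(2)] core_disjoint_biter[OF ab(2)] by blast
  moreover have "contact a b \<notin> core b" by (fact contact_notin_core_of_biter[OF ab(2)])
  ultimately show "meet u v \<notin> core u" "meet u v \<notin> core v"
    using ab(1,3) by auto
qed

lemma cores_disjoint:
  assumes "r \<in> maximal_rects" "u \<in> maximal_rects" "r \<noteq> u"
  shows "core r \<inter> core u = {}"
proof (rule ccontr)
  assume "core r \<inter> core u \<noteq> {}"
  then have "rects_intersect r u"
    using core_subset_rect unfolding rects_intersect_def by blast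
  then have edge: "ig_edge R r u"
    using assms maximal_rects_subset unfolding ig_edge_def by auto
  then consider "u \<in> biters r" | "r \<in> biters u"
    using maximal_edge_biters[OF assms(1,2)] by blast
  then show False
    using core_disjoint_biter core_subset_rect \<open>core r \<inter> core u \<noteq> {}\<close> by cases blast+
qed

lemma segment_to_meet_subset:
  assumes "u \<in> maximal_rects" "v \<in> maximal_rects" "ig_edge R u v" "p \<in> core u"
  shows "closed_segment p (meet u v) \<subseteq> rect_set u"
  using meet_in_rects(1)[OF assms(1-3)] core_subset_rect[of u] assms(4)
  by (intro closed_segment_subset convex_rect_set) auto

lemma segment_to_meet_inter_biter:
  assumes "u \<in> maximal_rects" "v \<in> maximal_rects" "v \<in> biters u" "p \<in> core u"
  shows "closed_segment p (meet u v) \<inter> rect_set v \<subseteq> {meet u v}"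
proof -
  have "meet u v = contact u v" using biterD(4)[OF assms(3)] unfolding meet_def by simp
  then show ?thesis using segment_to_contact[OF assms(4,3)] by simp
qed

lemma segment_to_meet_avoids_cores:
  assumes "u \<in> maximal_rects" "s \<in> maximal_rects" "ig_edge R u s" "p \<in> core u"
    and "r \<in> maximal_rects" "r \<noteq> u"
  shows "closed_segment p (meet u s) \<inter> core r = {}"
proof (rule ccontr)
  assume "closed_segment p (meet u s) \<inter> core r \<noteq> {}"
  then obtain z where z: "z \<in> closed_segment p (meet u s)" "z \<in> core r" by blast
  then have "z \<in> rect_set u" "z \<in> rect_set r"
    using segment_to_meet_subset[OF assms(1-4)] core_subset_rect by blast+
  then have edge: "ig_edge R u r"
    using assms maximal_rects_subset unfolding ig_edge_def rects_intersect_def by auto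
  show False
  proof (cases "u \<in> biters r")
    case True
    then show False using core_disjoint_biter z(2) \<open>z \<in> rect_set u\<close> by blast
  next
    case False
    then have r: "r \<in> biters u" using maximal_edge_biters[OF assms(5,1) ig_edge_sym[OF edge]] by blast
    show False
    proof (cases "s = r")
      case True
      then have "z = meet u r"
        using segment_to_meet_inter_biter[OF assms(1,5) r assms(4)] z \<open>z \<in> rect_set r\<close> by blast
      then show False using meet_notin_cores(2)[OF assms(1,5) edge] z(2) by simp
    next
      case False
      have "\<not> rects_intersect s r"
        using no_common_neighbour[of u s r] assms(3) edge False unfolding ig_edge_def by blast
      then have "closed_segment p (meet u s) \<inter> rect_set r = {}"
        using segment_avoids_biter[OF assms(4,3) meet_in_rects(2)[OF assms(1-3)] r] by blast
      then show False using z \<open>z \<in> rect_set r\<close> by blast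
    qed
  qed
qed


definition target :: "(rect \<Rightarrow> real \<times> real) \<Rightarrow> rect \<Rightarrow> rect \<Rightarrow> real \<times> real" where
  "target leaf_pos u v = (if v \<in> maximal_rects then meet u v else leaf_pos v)"

end

locale rect_drawing = rect_family +
  fixes leaf_pos :: "rect \<Rightarrow> real \<times> real" and centre :: "rect \<Rightarrow> real \<times> real"
  assumes leaf_pos_in_core: "pendant t r \<Longrightarrow> leaf_pos t \<in> core r"
    and inj_leaf_pos: "inj_on leaf_pos (R - maximal_rects)"
    and centre_in_core: "r \<in> maximal_rects \<Longrightarrow> centre r \<in> core r"
    and centre_not_target: "r \<in> maximal_rects \<Longrightarrow> ig_edge R r v \<Longrightarrow> centre r \<noteq> target leaf_pos r v"
    and centre_generic: "r \<in> maximal_rects \<Longrightarrow> ig_edge R r v \<Longrightarrow> ig_edge R r w \<Longrightarrow>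
      target leaf_pos r v \<noteq> target leaf_pos r w \<Longrightarrow>
      \<not> collinear {target leaf_pos r v, centre r, target leaf_pos r w}"
begin

abbreviation ray :: "rect \<Rightarrow> rect \<Rightarrow> (real \<times> real) set" where
  "ray u v \<equiv> closed_segment (centre u) (target leaf_pos u v)"

lemma target_distinct:
  assumes "u \<in> maximal_rects" "ig_edge R u v" "ig_edge R u w" "v \<noteq> w"
  shows "target leaf_pos u v \<noteq> target leaf_pos u w"
proof -
  have leaf_target: "target leaf_pos u x \<in> core u" if "x \<notin> maximal_rects" "ig_edge R u x" for x
    using neighbour_of_maximal[OF assms(1) that(2)] leaf_pos_in_core that(1)
    unfolding target_def by auto
  have meet_target: "target leaf_pos u x \<notin> core u" if "x \<in> maximal_rects" "ig_edge R u x" for x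
    using meet_notin_cores(1)[OF assms(1) that] that(1) unfolding target_def by simp
  show ?thesis
  proof (cases "v \<in> maximal_rects"; cases "w \<in> maximal_rects")
    assume "v \<in> maximal_rects" "w \<in> maximal_rects"
    moreover have "\<not> rects_intersect v w"
      using no_common_neighbour[of u v w] assms(2-4) unfolding ig_edge_def by blast
    ultimately show ?thesis
      using meet_in_rects(2)[OF assms(1) _ assms(2)] meet_in_rects(2)[OF assms(1) _ assms(3)]
      unfolding target_def rects_intersect_def by auto
  next
    assume "v \<notin> maximal_rects" "w \<notin> maximal_rects"
    then show ?thesis
      using inj_leaf_pos assms(2-4) unfolding target_def ig_edge_def inj_on_def by auto
  qed (use leaf_target meet_target assms in metis)+
qed

lemma rays_meet:
  assumes "u \<in> maximal_rects" "ig_edge R u v" "ig_edge R u w" "v \<noteq> w"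
  shows "ray u v \<inter> ray u w = {centre u}" "target leaf_pos u w \<notin> ray u v"
proof -
  have "\<not> collinear {target leaf_pos u v, centre u, target leaf_pos u w}"
    using centre_generic[OF assms(1-3) target_distinct[OF assms]] .
  then show *: "ray u v \<inter> ray u w = {centre u}"
    using Int_closed_segment by (metis closed_segment_commute)
  show "target leaf_pos u w \<notin> ray u v"
  proof
    assume "target leaf_pos u w \<in> ray u v"
    then have "target leaf_pos u w \<in> ray u v \<inter> ray u w" by simp
    then show False using * centre_not_target[OF assms(1,3)] by simp
  qed
qed

definition pos :: "rect \<Rightarrow> real \<times> real" where
  "pos v = (if v \<in> maximal_rects then centre v else leaf_pos v)"

definition bend :: "rect \<Rightarrow> rect \<Rightarrow> real \<times> real" where
  "bend u v = (if u \<in> maximal_rects \<and> v \<in> maximal_rects then meet u v else midpoint (pos u) (pos v))"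

abbreviation arm :: "rect \<Rightarrow> rect \<Rightarrow> (real \<times> real) set" where
  "arm u v \<equiv> closed_segment (pos u) (bend u v)"

text \<open>\<open>pos v\<close> lies in the core of \<open>home v\<close>, and the arm of \<open>u\<close> towards \<open>v\<close> lies on the ray
  from the centre of \<open>home u\<close> towards its neighbour \<open>spoke u v\<close>.\<close>
definition home :: "rect \<Rightarrow> rect" where
  "home v = (if v \<in> maximal_rects then v else parent v)"

definition spoke :: "rect \<Rightarrow> rect \<Rightarrow> rect" where
  "spoke u v = (if u \<in> maximal_rects then v else u)"

lemma pos_pendant:
  assumes "pendant t r"
  shows "home t = r" "pos t = target leaf_pos r t" "pos t = leaf_pos t"
  using assms pendant_not_maximal[OF assms] parent_eq[OF assms]
  unfolding home_def pos_def target_def by auto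

lemma home_core:
  assumes "v \<in> R"
  shows "home v \<in> maximal_rects" "pos v \<in> core (home v)"
proof (atomize(full), cases "v \<in> maximal_rects")
  case True
  then show "home v \<in> maximal_rects \<and> pos v \<in> core (home v)"
    using centre_in_core unfolding home_def pos_def by auto
next
  case False
  then have "pendant v (parent v)" using pendant_parent assms by blast
  then show "home v \<in> maximal_rects \<and> pos v \<in> core (home v)"
    using pos_pendant(1,3) pendant_maximal leaf_pos_in_core by metis
qed

lemma inj_pos: "inj_on pos R"
proof (rule inj_onI)
  fix v w assume "v \<in> R" "w \<in> R" and eq: "pos v = pos w"
  have "pos v \<in> core (home v) \<inter> core (home w)"
    using home_core(2)[OF \<open>v \<in> R\<close>] home_core(2)[OF \<open>w \<in> R\<close>] eq by simp
  then have same_home: "home v = home w"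
    using cores_disjoint[OF home_core(1)[OF \<open>v \<in> R\<close>] home_core(1)[OF \<open>w \<in> R\<close>]] by auto
  have centre_ne_leaf: "pos a \<noteq> pos b" if "a \<in> maximal_rects" "b \<in> R" "b \<notin> maximal_rects" "home a = home b" for a b
  proof -
    have "pendant b a" using that pendant_parent unfolding home_def by auto
    then show ?thesis
      using centre_not_target[OF that(1) pendant_edge] pos_pendant(2) that(1) unfolding pos_def by metis
  qed
  show "v = w"
  proof (cases "v \<in> maximal_rects"; cases "w \<in> maximal_rects")
    assume "v \<in> maximal_rects" "w \<in> maximal_rects"
    then show "v = w" using same_home unfolding home_def by simp
  next
    assume "v \<notin> maximal_rects" "w \<notin> maximal_rects"
    then show "v = w"
      using inj_leaf_pos eq \<open>v \<in> R\<close> \<open>w \<in> R\<close> unfolding pos_def inj_on_def by simp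
  next
    assume "v \<in> maximal_rects" "w \<notin> maximal_rects"
    then show "v = w" using centre_ne_leaf[of v w] same_home eq \<open>w \<in> R\<close> by simp
  next
    assume "v \<notin> maximal_rects" "w \<in> maximal_rects"
    then show "v = w" using centre_ne_leaf[of w v] same_home eq \<open>v \<in> R\<close> by simp
  qed
qed

lemma bend_sym: "ig_edge R u v \<Longrightarrow> bend u v = bend v u"
  unfolding bend_def using meet_sym[of u v] by (auto simp: midpoint_sym)

lemma pos_ne_bend:
  assumes "ig_edge R u v"
  shows "pos u \<noteq> bend u v"
proof (cases "u \<in> maximal_rects \<and> v \<in> maximal_rects")
  case True
  then show ?thesis
    using meet_notin_cores(1)[OF _ _ assms] centre_in_core[of u] unfolding bend_def pos_def by auto
next
  case False
  have "pos u \<noteq> pos v" using inj_pos assms unfolding ig_edge_def inj_on_def by blast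
  then show ?thesis using False unfolding bend_def by (metis midpoint_eq_endpoint(1))
qed

lemma arm_in_ray:
  assumes "ig_edge R u v"
  shows "home u \<in> maximal_rects" "ig_edge R (home u) (spoke u v)"
    and "arm u v \<subseteq> ray (home u) (spoke u v)"
    and "centre (home u) \<in> arm u v \<longleftrightarrow> u \<in> maximal_rects"
proof -
  have "home u \<in> maximal_rects \<and> ig_edge R (home u) (spoke u v) \<and>
    arm u v \<subseteq> ray (home u) (spoke u v) \<and> (centre (home u) \<in> arm u v \<longleftrightarrow> u \<in> maximal_rects)"
    using assms
  proof (cases rule: edge_cases)
    case 1
    then show ?thesis
      using assms unfolding home_def spoke_def bend_def pos_def target_def by auto
  next
    case 2
    then have "v \<notin> maximal_rects" "u \<in> maximal_rects" using pendant_not_maximal pendant_maximal by auto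
    then show ?thesis
      using assms pos_pendant[OF 2] closed_segment_subset[of _ "closed_segment (centre u) (leaf_pos v)"]
      unfolding home_def spoke_def bend_def pos_def target_def
      by (auto simp: midpoint_in_closed_segment)
  next
    case 3
    then have u: "u \<notin> maximal_rects" "v \<in> maximal_rects" using pendant_not_maximal pendant_maximal by auto
    have "centre v \<noteq> leaf_pos u"
      using centre_not_target[OF u(2) pendant_edge[OF 3]] u(1) unfolding target_def by simp
    then have "centre v \<notin> arm u v"
      using notin_segment_midpoint[of "centre v" "leaf_pos u"] pos_pendant(3)[OF 3] u
      unfolding bend_def pos_def by (simp add: midpoint_sym closed_segment_commute)
    moreover have "arm u v \<subseteq> ray v u"
      using pos_pendant[OF 3] u csegment_midpoint_subset[of "centre v" "leaf_pos u"]
      unfolding bend_def pos_def target_def by (simp add: midpoint_sym closed_segment_commute)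
    ultimately show ?thesis
      using pos_pendant(1)[OF 3] u ig_edge_sym[OF assms] unfolding spoke_def by auto
  qed
  then show "home u \<in> maximal_rects" "ig_edge R (home u) (spoke u v)"
    and "arm u v \<subseteq> ray (home u) (spoke u v)"
    and "centre (home u) \<in> arm u v \<longleftrightarrow> u \<in> maximal_rects" by auto
qed

lemma arm_subset_core:
  assumes "ig_edge R u v" "\<not> (u \<in> maximal_rects \<and> v \<in> maximal_rects)"
  shows "arm u v \<subseteq> core (home u)"
proof -
  have "home v = home u"
    using assms by (cases rule: edge_cases) (auto simp: home_def parent_eq pendant_maximal)
  then have "pos u \<in> core (home u)" "pos v \<in> core (home u)"
    using home_core(2) assms(1) unfolding ig_edge_def by metis+
  then have "closed_segment (pos u) (pos v) \<subseteq> core (home u)"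
    by (intro closed_segment_subset convex_core)
  moreover have "arm u v \<subseteq> closed_segment (pos u) (pos v)"
    using assms(2) csegment_midpoint_subset[of "pos v" "pos u"] unfolding bend_def
    by (auto simp: closed_segment_commute midpoint_sym)
  ultimately show ?thesis by blast
qed

lemma maximal_arm_avoids_cores:
  assumes "ig_edge R u v" "u \<in> maximal_rects" "v \<in> maximal_rects" "r \<in> maximal_rects" "r \<noteq> u"
  shows "arm u v \<inter> core r = {}"
  using segment_to_meet_avoids_cores[OF assms(2,3,1) centre_in_core[OF assms(2)] assms(4,5)]
    assms(2,3) unfolding pos_def bend_def by simp

lemma maximal_arm_subset_rect:
  assumes "ig_edge R u v" "u \<in> maximal_rects" "v \<in> maximal_rects"
  shows "arm u v \<subseteq> rect_set u"
  using segment_to_meet_subset[OF assms(2,3,1) centre_in_core[OF assms(2)]] assms(2,3)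
  unfolding pos_def bend_def by simp

lemma maximal_arm_inter_biter:
  assumes "ig_edge R u v" "u \<in> maximal_rects" "v \<in> maximal_rects" "v \<in> biters u"
  shows "arm u v \<inter> rect_set v \<subseteq> {bend u v}"
  using segment_to_meet_inter_biter[OF assms(2,3,4) centre_in_core[OF assms(2)]] assms(2,3)
  unfolding pos_def bend_def by simp


lemma edge_from_pendant:
  assumes "ig_edge R u v" "u \<notin> maximal_rects"
  shows "pendant u v" "home u = v"
proof -
  have "pendant u (parent u)" using pendant_parent assms unfolding ig_edge_def by blast
  then show "pendant u v" using pendant_only_neighbour[OF _ assms(1)] by metis
  then show "home u = v" using pos_pendant(1) by blast
qed

lemma arms_at_vertex:
  assumes "ig_edge R u v" "ig_edge R u w" "v \<noteq> w"
  shows "arm u v \<inter> arm u w = {pos u}"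
proof (cases "u \<in> maximal_rects")
  case True
  then have "arm u v \<inter> arm u w \<subseteq> {centre u}"
    using arm_in_ray(3)[OF assms(1)] arm_in_ray(3)[OF assms(2)] rays_meet(1)[OF True assms]
    unfolding home_def spoke_def by auto
  then show ?thesis using True unfolding pos_def by auto
next
  case False
  then show ?thesis using edge_from_pendant(2) assms by metis
qed

lemma maximal_halves_meet:
  assumes "ig_edge R u v" "u \<in> maximal_rects" "v \<in> maximal_rects" "v \<in> biters u"
  shows "arm u v \<inter> arm v u = {bend u v}"
proof -
  have "arm u v \<inter> arm v u \<subseteq> {bend u v}"
    using maximal_arm_inter_biter[OF assms] maximal_arm_subset_rect[OF ig_edge_sym[OF assms(1)] assms(3,2)]
    by blast
  then show ?thesis using bend_sym[OF assms(1)] by auto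
qed

lemma halves_meet:
  assumes "ig_edge R u v"
  shows "arm u v \<inter> arm v u = {bend u v}"
proof (cases "u \<in> maximal_rects \<and> v \<in> maximal_rects")
  case True
  then consider "v \<in> biters u" | "u \<in> biters v"
    using maximal_edge_biters[OF _ _ assms] by blast
  then show ?thesis
    using maximal_halves_meet[OF assms] maximal_halves_meet[OF ig_edge_sym[OF assms]] True
      bend_sym[OF assms] by cases auto
next
  case False
  then have "bend u v = midpoint (pos u) (pos v)" "bend v u = midpoint (pos u) (pos v)"
    unfolding bend_def by (auto simp: midpoint_sym)
  then show ?thesis
    using Int_closed_segment[of "midpoint (pos u) (pos v)" "pos u" "pos v"]
    by (simp add: closed_segment_commute)
qed

lemma maximal_arms_disjoint_biter:
  assumes "ig_edge R u v" "ig_edge R w x" "u \<in> maximal_rects" "v \<in> maximal_rects"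
    "w \<in> maximal_rects" "x \<in> maximal_rects" "(w, x) \<noteq> (v, u)" "w \<in> biters u"
  shows "arm u v \<inter> arm w x = {}"
proof -
  have uw: "ig_edge R u w" using assms(8) unfolding biters_def by blast
  have arm_w: "arm w x \<subseteq> rect_set w" using maximal_arm_subset_rect[OF assms(2,5,6)] .
  show ?thesis
  proof (cases "v = w")
    case False
    have "u \<in> R" "v \<in> R" "w \<in> R" "v \<noteq> u" "w \<noteq> u" "rects_intersect u v" "rects_intersect u w"
      using assms(1) uw unfolding ig_edge_def by auto
    then have "\<not> rects_intersect v w" using no_common_neighbour[of u v w] False by blast
    then have "arm u v \<inter> rect_set w = {}"
      using segment_avoids_biter[OF centre_in_core[OF assms(3)] assms(1) meet_in_rects(2)[OF assms(3,4,1)] assms(8)]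
        assms(3,4) unfolding pos_def bend_def by simp
    with arm_w show ?thesis by auto
  next
    case True
    have "arm u v \<inter> rect_set w \<subseteq> {bend u v}"
      using maximal_arm_inter_biter[OF assms(1,3,4)] assms(8) True by simp
    moreover have "bend u v = target leaf_pos w u"
      using meet_sym[OF assms(3,4,1)] assms(3,4) True unfolding bend_def target_def by simp
    moreover have "target leaf_pos w u \<notin> arm w x"
    proof -
      have "arm w x \<subseteq> ray w x" using arm_in_ray(3)[OF assms(2)] assms(5) by (simp add: home_def spoke_def)
      moreover have "x \<noteq> u" using assms(7) True by auto
      ultimately show ?thesis using rays_meet(2)[OF assms(5,2) ig_edge_sym[OF uw]] by blast
    qed
    ultimately show ?thesis using arm_w by auto
  qed
qed

lemma maximal_arms_disjoint:
  assumes "ig_edge R u v" "ig_edge R w x" "u \<in> maximal_rects" "v \<in> maximal_rects"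
    "w \<in> maximal_rects" "x \<in> maximal_rects" "u \<noteq> w" "(w, x) \<noteq> (v, u)"
  shows "arm u v \<inter> arm w x = {}"
proof (cases "rects_intersect u w")
  case False
  then show ?thesis
    using maximal_arm_subset_rect[OF assms(1,3,4)] maximal_arm_subset_rect[OF assms(2,5,6)]
    unfolding rects_intersect_def by blast
next
  case True
  then have "ig_edge R u w"
    using assms(1,2,7) unfolding ig_edge_def by blast
  then consider "w \<in> biters u" | "u \<in> biters w"
    using maximal_edge_biters[OF assms(3,5)] by blast
  then show ?thesis
  proof cases
    case 1
    then show ?thesis using maximal_arms_disjoint_biter[OF assms(1-6,8)] by simp
  next
    case 2
    have "(u, v) \<noteq> (x, w)" using assms(8) by auto
    then show ?thesis using maximal_arms_disjoint_biter[OF assms(2,1,5,6,3,4) _ 2] by blast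
  qed
qed

lemma arms_disjoint_same_home:
  assumes "ig_edge R u v" "ig_edge R w x" "u \<noteq> w" "(w, x) \<noteq> (v, u)" "home u = home w"
  shows "arm u v \<inter> arm w x = {}"
proof -
  have "\<not> (u \<in> maximal_rects \<and> w \<in> maximal_rects)"
    using assms(3,5) unfolding home_def by auto
  then have "centre (home u) \<notin> arm u v \<inter> arm w x"
    using arm_in_ray(4)[OF assms(1)] arm_in_ray(4)[OF assms(2)] assms(5) by auto
  moreover have "spoke u v \<noteq> spoke w x"
    using assms edge_from_pendant[OF assms(1)] edge_from_pendant[OF assms(2)]
      edge_from_pendant[OF ig_edge_sym[OF assms(1)]] edge_from_pendant[OF ig_edge_sym[OF assms(2)]]
    unfolding spoke_def home_def by (auto simp: pendant_not_maximal)
  then have "arm u v \<inter> arm w x \<subseteq> {centre (home u)}"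
    using arm_in_ray[OF assms(1)] arm_in_ray[OF assms(2)] rays_meet(1)[of "home u" "spoke u v" "spoke w x"]
      assms(5) by auto
  ultimately show ?thesis by blast
qed

lemma arms_disjoint:
  assumes "ig_edge R u v" "ig_edge R w x" "u \<noteq> w" "(w, x) \<noteq> (v, u)"
  shows "arm u v \<inter> arm w x = {}"
proof (cases "home u = home w")
  case True
  then show ?thesis using arms_disjoint_same_home[OF assms] by blast
next
  case False
  consider "u \<in> maximal_rects" "v \<in> maximal_rects" "w \<in> maximal_rects" "x \<in> maximal_rects"
    | "u \<in> maximal_rects" "v \<in> maximal_rects" "\<not> (w \<in> maximal_rects \<and> x \<in> maximal_rects)"
    | "\<not> (u \<in> maximal_rects \<and> v \<in> maximal_rects)" "w \<in> maximal_rects" "x \<in> maximal_rects"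
    | "\<not> (u \<in> maximal_rects \<and> v \<in> maximal_rects)" "\<not> (w \<in> maximal_rects \<and> x \<in> maximal_rects)"
    by blast
  then show ?thesis
  proof cases
    case 1
    then show ?thesis using maximal_arms_disjoint[OF assms(1,2) 1 assms(3,4)] by simp
  next
    case 2
    then have "home w \<noteq> u" using False unfolding home_def by simp
    then show ?thesis
      using maximal_arm_avoids_cores[OF assms(1) 2(1,2) arm_in_ray(1)[OF assms(2)]]
        arm_subset_core[OF assms(2) 2(3)] by blast
  next
    case 3
    then have "home u \<noteq> w" using False unfolding home_def by simp
    then show ?thesis
      using maximal_arm_avoids_cores[OF assms(2) 3(2,3) arm_in_ray(1)[OF assms(1)]]
        arm_subset_core[OF assms(1) 3(1)] by blast
  next
    case 4
    then show ?thesis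
      using arm_subset_core[OF assms(1) 4(1)] arm_subset_core[OF assms(2) 4(2)]
        cores_disjoint[OF arm_in_ray(1)[OF assms(1)] arm_in_ray(1)[OF assms(2)] False] by blast
  qed
qed

lemma home_of_point_on_arm:
  assumes "ig_edge R u v" "w \<in> R" "pos w \<in> arm u v"
  shows "home w = home u"
proof (cases "u \<in> maximal_rects \<and> v \<in> maximal_rects")
  case True
  have "home w = u"
  proof (rule ccontr)
    assume "home w \<noteq> u"
    then show False
      using maximal_arm_avoids_cores[OF assms(1) _ _ home_core(1)[OF assms(2)]] True
        home_core(2)[OF assms(2)] assms(3) by blast
  qed
  then show ?thesis using True unfolding home_def by simp
next
  case False
  then have "pos w \<in> core (home u)" using arm_subset_core[OF assms(1)] assms(3) by blast
  then show ?thesis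
    using cores_disjoint[OF home_core(1)[OF assms(2)] arm_in_ray(1)[OF assms(1)]]
      home_core(2)[OF assms(2)] by blast
qed

lemma pendant_off_arm:
  assumes "ig_edge R u v" "pendant w (home u)" "pos w \<in> arm u v"
  shows "w = u"
proof (cases "spoke u v = w")
  case False
  have "target leaf_pos (home u) w \<in> ray (home u) (spoke u v)"
    using pos_pendant(2)[OF assms(2)] assms(3) arm_in_ray(3)[OF assms(1)] by auto
  then show ?thesis
    using rays_meet(2)[OF arm_in_ray(1,2)[OF assms(1)] pendant_edge[OF assms(2)] False] by blast
next
  case True
  show ?thesis
  proof (rule ccontr)
    assume "w \<noteq> u"
    then have u: "u \<in> maximal_rects" "v = w" "home u = u"
      using True unfolding spoke_def home_def by (auto split: if_splits)
    then have arm: "arm u v = closed_segment (centre u) (midpoint (centre u) (leaf_pos w))"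
      using pendant_not_maximal[OF assms(2)] unfolding bend_def pos_def by simp
    have "leaf_pos w \<noteq> centre u"
      using centre_not_target[OF u(1) pendant_edge[OF assms(2)[unfolded u(3)]]]
        pendant_not_maximal[OF assms(2)] unfolding target_def by simp
    then have "leaf_pos w \<notin> closed_segment (centre u) (midpoint (centre u) (leaf_pos w))"
      using notin_segment_midpoint[of "leaf_pos w" "centre u"]
      by (simp add: closed_segment_commute midpoint_sym)
    then show False using assms(3) pos_pendant(3)[OF assms(2)] unfolding arm by simp
  qed
qed

lemma pos_off_arm:
  assumes "ig_edge R u v" "w \<in> R" "pos w \<in> arm u v"
  shows "w = u"
proof (cases "w \<in> maximal_rects")
  case True
  then have "centre (home u) \<in> arm u v"
    using home_of_point_on_arm[OF assms] assms(3) unfolding home_def pos_def by simp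
  then show ?thesis
    using arm_in_ray(4)[OF assms(1)] home_of_point_on_arm[OF assms] True unfolding home_def by auto
next
  case False
  then have "pendant w (home u)"
    using home_of_point_on_arm[OF assms] pendant_parent[OF assms(2)] unfolding home_def by simp
  then show ?thesis using pendant_off_arm[OF assms(1) _ assms(3)] by blast
qed

theorem planar: "planar_graph R (ig_edge R)"
proof (rule planar_graph_by_bent_edges[where p = pos and q = bend])
  show "\<And>u v. ig_edge R u v \<Longrightarrow> u \<in> R" and "\<And>u. \<not> ig_edge R u u"
    unfolding ig_edge_def by auto
qed (use ig_edge_sym bend_sym inj_pos pos_ne_bend arms_at_vertex halves_meet arms_disjoint
    pos_off_arm in auto)

end

context rect_family
begin

lemma infinite_core:
  assumes "r \<in> R"
  shows "infinite (core r)"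
proof
  assume "finite (core r)"
  then have "finite {core_left r<..<core_right r}"
    using finite_cartesian_productD1[of _ "{core_bottom r<..<core_top r}"] core_bounds_less(2)[OF assms]
    unfolding core_def by simp
  then show False using core_bounds_less(1)[OF assms] infinite_Ioo by blast
qed

lemma exists_leaf_pos:
  obtains leaf_pos where "\<And>t r. pendant t r \<Longrightarrow> leaf_pos t \<in> core r"
    and "inj_on leaf_pos (R - maximal_rects)"
proof -
  have "\<forall>r\<in>R. \<exists>g. inj_on g {t. pendant t r} \<and> g ` {t. pendant t r} \<subseteq> core r"
  proof
    fix r assume "r \<in> R"
    have "finite {t. pendant t r}"
      using finite_subset[OF _ finite_R] unfolding pendant_def by auto
    then obtain g where "inj_on g {t. pendant t r}" "g ` {t. pendant t r} \<subseteq> core r"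
      using inj_into_infinite infinite_core[OF \<open>r \<in> R\<close>] by blast
    then show "\<exists>g. inj_on g {t. pendant t r} \<and> g ` {t. pendant t r} \<subseteq> core r" by blast
  qed
  then obtain f where f: "\<forall>r\<in>R. inj_on (f r) {t. pendant t r} \<and> f r ` {t. pendant t r} \<subseteq> core r"
    by (rule bchoice[THEN exE])
  define leaf_pos where "leaf_pos t = f (parent t) t" for t
  have in_core: "leaf_pos t \<in> core r" if "pendant t r" for t r
    using f that parent_eq[OF that] unfolding leaf_pos_def pendant_def by auto
  have "inj_on leaf_pos (R - maximal_rects)"
  proof (rule inj_onI)
    fix t t' assume "t \<in> R - maximal_rects" "t' \<in> R - maximal_rects" "leaf_pos t = leaf_pos t'"
    then have p: "pendant t (parent t)" "pendant t' (parent t')"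
      using pendant_parent by auto
    then have "leaf_pos t \<in> core (parent t) \<inter> core (parent t')"
      using in_core[OF p(1)] in_core[OF p(2)] \<open>leaf_pos t = leaf_pos t'\<close> by simp
    then have "parent t = parent t'"
      using cores_disjoint[OF pendant_maximal[OF p(1)] pendant_maximal[OF p(2)]] by auto
    moreover have "inj_on (f (parent t)) {x. pendant x (parent t)}"
      using f p(1) unfolding pendant_def by blast
    ultimately show "t = t'"
      using p \<open>leaf_pos t = leaf_pos t'\<close> unfolding leaf_pos_def by (metis inj_onD mem_Collect_eq)
  qed
  with in_core show thesis using that by blast
qed

lemma exists_centre:
  fixes leaf_pos :: "rect \<Rightarrow> real \<times> real"
  obtains centre where "\<And>r. r \<in> R \<Longrightarrow> centre r \<in> core r"
    and "\<And>r v. r \<in> R \<Longrightarrow> ig_edge R r v \<Longrightarrow> centre r \<noteq> target leaf_pos r v"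
    and "\<And>r v w. r \<in> R \<Longrightarrow> ig_edge R r v \<Longrightarrow> ig_edge R r w \<Longrightarrow>
      target leaf_pos r v \<noteq> target leaf_pos r w \<Longrightarrow>
      \<not> collinear {target leaf_pos r v, centre r, target leaf_pos r w}"
proof -
  define targets where "targets r = target leaf_pos r ` {v. ig_edge R r v}" for r
  have "\<forall>r\<in>R. \<exists>c. c \<in> core r \<and> c \<notin> targets r \<and>
      (\<forall>a\<in>targets r. \<forall>b\<in>targets r. a \<noteq> b \<longrightarrow> \<not> collinear {a, c, b})"
  proof
    fix r assume "r \<in> R"
    have "finite (targets r)"
      unfolding targets_def ig_edge_def using finite_R by simp
    moreover have "2 \<le> DIM(real \<times> real)" by simp
    ultimately obtain c where "c \<in> core r" "c \<notin> targets r"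
      "\<And>a b. a \<in> targets r \<Longrightarrow> b \<in> targets r \<Longrightarrow> a \<noteq> b \<Longrightarrow> \<not> collinear {a, c, b}"
      using exists_point_off_lines[OF _ open_core core_nonempty[OF \<open>r \<in> R\<close>]] by blast
    then show "\<exists>c. c \<in> core r \<and> c \<notin> targets r \<and>
        (\<forall>a\<in>targets r. \<forall>b\<in>targets r. a \<noteq> b \<longrightarrow> \<not> collinear {a, c, b})" by blast
  qed
  then obtain centre where centre: "\<forall>r\<in>R. centre r \<in> core r \<and> centre r \<notin> targets r \<and>
      (\<forall>a\<in>targets r. \<forall>b\<in>targets r. a \<noteq> b \<longrightarrow> \<not> collinear {a, centre r, b})"
    by (rule bchoice[THEN exE])
  have target_in: "target leaf_pos r v \<in> targets r" if "ig_edge R r v" for r v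
    using that unfolding targets_def by simp
  show thesis
  proof (rule that[of centre])
    show "centre r \<in> core r" if "r \<in> R" for r
      using centre that by blast
    show "centre r \<noteq> target leaf_pos r v" if "r \<in> R" "ig_edge R r v" for r v
      using centre target_in[OF that(2)] that(1) by metis
    show "\<not> collinear {target leaf_pos r v, centre r, target leaf_pos r w}"
      if "r \<in> R" "ig_edge R r v" "ig_edge R r w" "target leaf_pos r v \<noteq> target leaf_pos r w" for r v w
      using centre target_in[OF that(2)] target_in[OF that(3)] that(1,4) by metis
  qed
qed

theorem planar_intersection_graph: "planar_graph R (ig_edge R)"
proof -
  obtain leaf_pos where leaf_pos: "\<And>t r. pendant t r \<Longrightarrow> leaf_pos t \<in> core r"
    "inj_on leaf_pos (R - maximal_rects)"
    using exists_leaf_pos by blast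
  obtain centre where centre: "\<And>r. r \<in> R \<Longrightarrow> centre r \<in> core r"
    "\<And>r v. r \<in> R \<Longrightarrow> ig_edge R r v \<Longrightarrow> centre r \<noteq> target leaf_pos r v"
    "\<And>r v w. r \<in> R \<Longrightarrow> ig_edge R r v \<Longrightarrow> ig_edge R r w \<Longrightarrow>
      target leaf_pos r v \<noteq> target leaf_pos r w \<Longrightarrow>
      \<not> collinear {target leaf_pos r v, centre r, target leaf_pos r w}"
    using exists_centre by blast
  interpret rect_drawing R leaf_pos centre
    using leaf_pos centre maximal_rects_subset by unfold_locales blast+
  show ?thesis by (fact planar)
qed

end

theorem lemma8:
  fixes R :: "rect set"
  assumes "finite R"
    and "general_position R"
    and "triangle_free R"
    and "non_crossing R"
  shows "planar_graph R (ig_edge R)"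
proof -
  interpret rect_family R using assms by unfold_locales
  show ?thesis by (fact planar_intersection_graph)
qed

end
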